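(* Let $(\mathbb{X},d,\mu)$ be a metric measure space satisfying the $\delta$-annular decay property for some $\delta\in(0,1]$ with constant $D_\delta\geq1$. Suppose $\varrho$ is an $L$-Lipschitz admissible radius function in a domain $\Omega\subset\mathbb{X}$ for some $L\geq1$. Then for every compact $K\subset\Omega$ and all $x,y\in K$, $$\frac{\mu(B_x\triangle B_y)}{\max\{\mu(B_x),\mu(B_y)\}}\leq4\,L\,D_\delta\left(\frac{d(x,y)}{\varrho_K}\right)^\delta.$$
   Context: A metric measure space $(\mathbb{X},d,\mu)$ is a metric space with a positive Borel regular measure $\mu$ with $0<\mu(B)<\infty$ for every ball $B$. It satisfies the $\delta$-annular decay property with constant $D_\delta$ if $\mu(B(x,R)\setminus B(x,r))\leq D_\delta\left(\frac{R-r}{R}\right)^\delta\mu(B(x,R))$ for all $x$, $0<r\leq R$. An admissible radius function in $\Omega$ is $\varrho\in C(\overline\Omega)$, $\varrho\ge0$, with $0<\varrho(x)\leq\mathrm{dist}(x,\partial\Omega)$ for $x\in\Omega$ and $\varrho=0$ exactly on $\partial\Omega$; $L$-Lipschitz means $|\varrho(x)-\varrho(y)|\le L\,d(x,y)$ for $x,y\in\Omega$. $\varrho_K=\inf_K\varrho$, $B_x=\overline{B}(x,\varrho(x))$, $A\triangle B=(A\setminus B)\cup(B\setminus A)$. *)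

theory Defs
  imports "HOL-Analysis.Analysis"
begin

definition metric_measure_space :: "('a::metric_space) measure \<Rightarrow> bool" where
  "metric_measure_space \<mu> \<longleftrightarrow> sets \<mu> = sets borel \<and>
     (\<forall>x r. 0 < r \<longrightarrow> 0 < emeasure \<mu> (ball x r) \<and> emeasure \<mu> (ball x r) < \<infinity>)"

definition annular_decay :: "('a::metric_space) measure \<Rightarrow> real \<Rightarrow> real \<Rightarrow> bool" where
  "annular_decay \<mu> \<delta> D \<longleftrightarrow>
     (\<forall>x r R. 0 < r \<and> r \<le> R \<longrightarrow>
        measure \<mu> (ball x R - ball x r) \<le> D * ((R - r) / R) powr \<delta> * measure \<mu> (ball x R))"

definition domain :: "('a::metric_space) set \<Rightarrow> bool" where
  "domain \<Omega> \<longleftrightarrow> open \<Omega> \<and> connected \<Omega> \<and> \<Omega> \<noteq> {}"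

text \<open>Admissible radius function; dist(x, boundary) is encoded as
  \<open>\<forall>z \<in> frontier \<Omega>. \<rho> x \<le> dist x z\<close> (so an empty boundary means distance \<infinity>).\<close>
definition admissible_radius :: "('a::metric_space) set \<Rightarrow> ('a \<Rightarrow> real) \<Rightarrow> bool" where
  "admissible_radius \<Omega> \<rho> \<longleftrightarrow>
     continuous_on (closure \<Omega>) \<rho> \<and>
     (\<forall>x\<in>closure \<Omega>. 0 \<le> \<rho> x) \<and>
     (\<forall>x\<in>\<Omega>. 0 < \<rho> x \<and> (\<forall>z\<in>frontier \<Omega>. \<rho> x \<le> dist x z)) \<and>
     (\<forall>x\<in>closure \<Omega>. \<rho> x = 0 \<longleftrightarrow> x \<in> frontier \<Omega>)"

definition lipschitz_in :: "('a::metric_space) set \<Rightarrow> real \<Rightarrow> ('a \<Rightarrow> real) \<Rightarrow> bool" where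
  "lipschitz_in \<Omega> L \<rho> \<longleftrightarrow> (\<forall>x\<in>\<Omega>. \<forall>y\<in>\<Omega>. \<bar>\<rho> x - \<rho> y\<bar> \<le> L * dist x y)"

definition symdiff :: "'a set \<Rightarrow> 'a set \<Rightarrow> 'a set" where
  "symdiff A B = (A - B) \<union> (B - A)"

end

theory Submission imports Defs begin

text \<open>
  If \<open>d(x,y) < \<rho>(y)\<close>, every point of \<open>B\<^sub>x \ B\<^sub>y\<close> lies at distance at least \<open>\<rho>(y) - d(x,y)\<close>
  from \<open>x\<close>, so \<open>B\<^sub>x \ B\<^sub>y\<close> sits in an annulus around \<open>x\<close> of width at most \<open>(L+1) d(x,y)\<close>
  by the Lipschitz bound. Annular decay (after passing from open to closed outer balls by a
  limit) bounds its measure by \<open>D ((L+1) d(x,y) / \<rho>(x))\<^sup>\<delta> \<mu>(B\<^sub>x)\<close>, and \<open>(L+1)\<^sup>\<delta> \<le> 2L\<close>.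
  Adding the two halves of the symmetric difference gives the constant \<open>4LD\<close>; when
  \<open>d(x,y) \<ge> \<rho>\<^sub>K\<close> the right-hand side is at least \<open>4\<close> and the trivial bound suffices.
\<close>

lemma metric_measure_space_sets:
  "metric_measure_space \<mu> \<Longrightarrow> sets \<mu> = sets borel"
  unfolding metric_measure_space_def by blast

lemma metric_measure_space_emeasure_ball_finite:
  fixes \<mu> :: "'a::metric_space measure"
  assumes "metric_measure_space \<mu>"
  shows "emeasure \<mu> (ball x r) \<noteq> \<infinity>"
  using assms unfolding metric_measure_space_def
  by (cases "0 < r") (auto simp: ball_empty less_top)

lemma metric_measure_space_fmeasurable_ball:
  fixes \<mu> :: "'a::metric_space measure"
  assumes "metric_measure_space \<mu>"
  shows "ball x r \<in> fmeasurable \<mu>"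
  using metric_measure_space_emeasure_ball_finite[OF assms]
  by (auto simp: fmeasurable_def metric_measure_space_sets[OF assms] top.not_eq_extremum)

lemma metric_measure_space_fmeasurable_cball:
  fixes \<mu> :: "'a::metric_space measure"
  assumes "metric_measure_space \<mu>"
  shows "cball x r \<in> fmeasurable \<mu>"
  by (rule fmeasurableI2[OF metric_measure_space_fmeasurable_ball[OF assms, of x "\<bar>r\<bar> + 1"]])
     (auto simp: metric_measure_space_sets[OF assms])

lemma Inter_ball_eq_cball:
  fixes x :: "'a::metric_space"
  shows "(\<Inter>n. ball x (r + inverse (real (Suc n)))) = cball x r"
proof (intro equalityI subsetI)
  fix z assume z: "z \<in> cball x r"
  have "dist x z < r + inverse (real (Suc n))" for n
  proof -
    have "0 < inverse (real (Suc n))" by simp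
    then show ?thesis using z unfolding mem_cball by linarith
  qed
  then show "z \<in> (\<Inter>n. ball x (r + inverse (real (Suc n))))" by simp
next
  fix z assume z: "z \<in> (\<Inter>n. ball x (r + inverse (real (Suc n))))"
  show "z \<in> cball x r"
  proof (rule ccontr)
    assume "z \<notin> cball x r"
    then obtain n where "inverse (real (Suc n)) < dist x z - r"
      using reals_Archimedean[of "dist x z - r"] by auto
    moreover have "dist x z < r + inverse (real (Suc n))" using z by auto
    ultimately show False by linarith
  qed
qed

lemma metric_measure_space_measure_ball_tendsto_cball:
  fixes \<mu> :: "'a::metric_space measure"
  assumes "metric_measure_space \<mu>"
  shows "(\<lambda>n. measure \<mu> (ball x (r + inverse (real (Suc n))))) \<longlonglongrightarrow> measure \<mu> (cball x r)"
proof -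
  have "decseq (\<lambda>n. ball x (r + inverse (real (Suc n))))"
    by (intro decseq_SucI subset_ball) (simp add: le_imp_inverse_le)
  then show ?thesis
    unfolding Inter_ball_eq_cball[symmetric]
    by (intro Lim_measure_decseq)
       (auto simp: metric_measure_space_sets[OF assms]
             metric_measure_space_emeasure_ball_finite[OF assms, simplified])
qed

lemma annular_decay_cball:
  fixes \<mu> :: "'a::metric_space measure"
  assumes mms: "metric_measure_space \<mu>" and decay: "annular_decay \<mu> \<delta> D"
    and "0 \<le> D" "0 < \<delta>" "0 < r" "r \<le> R"
  shows "measure \<mu> (cball x R - ball x r) \<le> D * ((R - r) / R) powr \<delta> * measure \<mu> (cball x R)"
proof (rule LIMSEQ_le_const)
  define R' where "R' n = R + inverse (real (Suc n))" for n
  have R'_gt: "R < R' n" for n by (simp add: R'_def)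
  have R'_ge: "0 < R' n" "r \<le> R' n" for n using R'_gt[of n] assms(5,6) by linarith+
  have R'_tendsto: "R' \<longlonglongrightarrow> R"
    unfolding R'_def using tendsto_add[OF tendsto_const LIMSEQ_inverse_real_of_nat, of R] by simp
  have ball_tendsto: "(\<lambda>n. measure \<mu> (ball x (R' n))) \<longlonglongrightarrow> measure \<mu> (cball x R)"
    unfolding R'_def by (rule metric_measure_space_measure_ball_tendsto_cball[OF mms])
  show "(\<lambda>n. D * ((R' n - r) / R' n) powr \<delta> * measure \<mu> (ball x (R' n)))
      \<longlonglongrightarrow> D * ((R - r) / R) powr \<delta> * measure \<mu> (cball x R)"
    using R'_ge assms(4-6)
    by (intro tendsto_mult tendsto_const tendsto_powr2 tendsto_divide tendsto_diff R'_tendsto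
          ball_tendsto always_eventually allI divide_nonneg_pos) auto
  show "\<exists>N. \<forall>n\<ge>N. measure \<mu> (cball x R - ball x r)
      \<le> D * ((R' n - r) / R' n) powr \<delta> * measure \<mu> (ball x (R' n))"
  proof (intro exI allI impI)
    fix n
    have "cball x R - ball x r \<subseteq> ball x (R' n) - ball x r" using R'_gt[of n] by auto
    then have "measure \<mu> (cball x R - ball x r) \<le> measure \<mu> (ball x (R' n) - ball x r)"
      by (intro measure_mono_fmeasurable)
         (auto simp: metric_measure_space_sets[OF mms]
               intro: fmeasurable.Diff metric_measure_space_fmeasurable_ball[OF mms])
    also have "\<dots> \<le> D * ((R' n - r) / R' n) powr \<delta> * measure \<mu> (ball x (R' n))"
      using decay R'_ge[of n] assms(5) unfolding annular_decay_def by auto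
    finally show "measure \<mu> (cball x R - ball x r)
        \<le> D * ((R' n - r) / R' n) powr \<delta> * measure \<mu> (ball x (R' n))" .
  qed
qed

lemma cball_diff_cball_subset_annulus:
  fixes x y :: "'a::metric_space"
  shows "cball x rx - cball y ry \<subseteq> cball x rx - ball x (min (ry - dist x y) rx)"
proof
  fix z assume "z \<in> cball x rx - cball y ry"
  moreover have "dist y z \<le> dist x y + dist x z"
    by (metis dist_commute dist_triangle)
  ultimately show "z \<in> cball x rx - ball x (min (ry - dist x y) rx)" by auto
qed

lemma measure_cball_diff_cball_le:
  fixes \<mu> :: "'a::metric_space measure"
  assumes mms: "metric_measure_space \<mu>" and decay: "annular_decay \<mu> \<delta> D"
    and "0 \<le> D" "0 < \<delta>" "dist x y < ry" "0 < rx"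
    and lip: "\<bar>rx - ry\<bar> \<le> L * dist x y"
  shows "measure \<mu> (cball x rx - cball y ry)
      \<le> D * ((L + 1) * dist x y / rx) powr \<delta> * measure \<mu> (cball x rx)"
proof -
  define r where "r = min (ry - dist x y) rx"
  have "0 < r" "r \<le> rx" using assms(5,6) by (auto simp: r_def)
  have "measure \<mu> (cball x rx - cball y ry) \<le> measure \<mu> (cball x rx - ball x r)"
    unfolding r_def
    by (intro measure_mono_fmeasurable cball_diff_cball_subset_annulus)
       (auto simp: metric_measure_space_sets[OF mms]
             intro!: fmeasurable_Diff metric_measure_space_fmeasurable_cball[OF mms])
  also have "\<dots> \<le> D * ((rx - r) / rx) powr \<delta> * measure \<mu> (cball x rx)"
    using annular_decay_cball[OF mms decay] assms(3,4) \<open>0 < r\<close> \<open>r \<le> rx\<close> by blast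
  also have "\<dots> \<le> D * ((L + 1) * dist x y / rx) powr \<delta> * measure \<mu> (cball x rx)"
  proof (intro mult_right_mono mult_left_mono powr_mono2 divide_right_mono)
    show "rx - r \<le> (L + 1) * dist x y"
      using lip by (auto simp: r_def min_def abs_le_iff algebra_simps)
  qed (use assms(3,4,6) \<open>r \<le> rx\<close> in auto)
  finally show ?thesis .
qed

lemma powr_mult_le_of_ge_one:
  fixes a b \<delta> :: real
  assumes "1 \<le> a" "0 \<le> b" "0 \<le> \<delta>" "\<delta> \<le> 1"
  shows "(a * b) powr \<delta> \<le> a * b powr \<delta>"
proof -
  have "a powr \<delta> \<le> a powr 1" using assms by (intro powr_mono) auto
  then show ?thesis
    using assms by (simp add: powr_mult mult_right_mono)
qed

lemma measure_cball_diff_cball_le_lower_radius: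
  fixes \<mu> :: "'a::metric_space measure"
  assumes mms: "metric_measure_space \<mu>" and decay: "annular_decay \<mu> \<delta> D"
    and "0 \<le> D" "0 < \<delta>" "\<delta> \<le> 1" "1 \<le> L"
    and "dist x y < m" "m \<le> rx" "m \<le> ry" "\<bar>rx - ry\<bar> \<le> L * dist x y"
  shows "measure \<mu> (cball x rx - cball y ry)
      \<le> 2 * L * D * (dist x y / m) powr \<delta> * measure \<mu> (cball x rx)"
proof -
  have "0 < m" using assms(7) zero_le_dist[of x y] by linarith
  have "(L + 1) * dist x y / rx \<le> (L + 1) * dist x y / m"
    using assms(6,8) \<open>0 < m\<close> by (intro divide_left_mono) auto
  also have "\<dots> \<le> (2 * L) * (dist x y / m)"
    using assms(6) \<open>0 < m\<close> by (simp add: divide_right_mono mult_right_mono)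
  finally have "((L + 1) * dist x y / rx) powr \<delta> \<le> ((2 * L) * (dist x y / m)) powr \<delta>"
    using assms(4,6,8) \<open>0 < m\<close> by (intro powr_mono2) auto
  also have "\<dots> \<le> 2 * L * (dist x y / m) powr \<delta>"
    using assms(4-6) \<open>0 < m\<close> by (intro powr_mult_le_of_ge_one) auto
  finally have growth: "((L + 1) * dist x y / rx) powr \<delta> \<le> 2 * L * (dist x y / m) powr \<delta>" .
  have "measure \<mu> (cball x rx - cball y ry)
      \<le> D * ((L + 1) * dist x y / rx) powr \<delta> * measure \<mu> (cball x rx)"
    using assms(7-10) \<open>0 < m\<close> by (intro measure_cball_diff_cball_le[OF mms decay assms(3,4)]) auto
  also have "\<dots> \<le> D * (2 * L * (dist x y / m) powr \<delta>) * measure \<mu> (cball x rx)"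
    using growth assms(3) by (intro mult_right_mono mult_left_mono) auto
  finally show ?thesis by (simp add: ac_simps)
qed

lemma measure_symdiff_le:
  assumes "A \<in> sets M" "B \<in> sets M"
  shows "measure M (symdiff A B) \<le> measure M (A - B) + measure M (B - A)"
  unfolding symdiff_def using assms by (intro measure_Un_le) auto

lemma measure_symdiff_le_twice_max:
  assumes "A \<in> fmeasurable M" "B \<in> fmeasurable M"
  shows "measure M (symdiff A B) \<le> 2 * max (measure M A) (measure M B)"
proof -
  have "measure M (symdiff A B) \<le> measure M (A - B) + measure M (B - A)"
    using assms by (intro measure_symdiff_le) auto
  also have "\<dots> \<le> measure M A + measure M B"
    using assms by (intro add_mono measure_mono_fmeasurable) auto
  finally show ?thesis by linarith
qed

lemma measure_symdiff_cball_le_of_dist_less: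
  fixes \<mu> :: "'a::metric_space measure"
  assumes mms: "metric_measure_space \<mu>" and decay: "annular_decay \<mu> \<delta> D"
    and "0 \<le> D" "0 < \<delta>" "\<delta> \<le> 1" "1 \<le> L"
    and "dist x y < m" "m \<le> rx" "m \<le> ry" "\<bar>rx - ry\<bar> \<le> L * dist x y"
  shows "measure \<mu> (symdiff (cball x rx) (cball y ry))
      \<le> 4 * L * D * (dist x y / m) powr \<delta> * max (measure \<mu> (cball x rx)) (measure \<mu> (cball y ry))"
proof -
  define c where "c = 2 * L * D * (dist x y / m) powr \<delta>"
  have "0 \<le> c" using assms(3,6) by (simp add: c_def)
  have "measure \<mu> (symdiff (cball x rx) (cball y ry))
      \<le> measure \<mu> (cball x rx - cball y ry) + measure \<mu> (cball y ry - cball x rx)"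
    by (intro measure_symdiff_le) (simp_all add: metric_measure_space_sets[OF mms])
  also have "\<dots> \<le> c * measure \<mu> (cball x rx) + c * measure \<mu> (cball y ry)"
  proof (intro add_mono)
    show "measure \<mu> (cball x rx - cball y ry) \<le> c * measure \<mu> (cball x rx)"
      unfolding c_def by (rule measure_cball_diff_cball_le_lower_radius[OF mms decay assms(3-10)])
    show "measure \<mu> (cball y ry - cball x rx) \<le> c * measure \<mu> (cball y ry)"
      unfolding c_def
      using measure_cball_diff_cball_le_lower_radius[OF mms decay assms(3-6), of y x m ry rx] assms(7-10)
      by (simp add: dist_commute abs_minus_commute)
  qed
  also have "\<dots> \<le> 2 * c * max (measure \<mu> (cball x rx)) (measure \<mu> (cball y ry))"
    using \<open>0 \<le> c\<close> by (simp add: max_def mult_left_mono)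
  finally show ?thesis by (simp add: c_def)
qed

lemma measure_symdiff_cball_le:
  fixes \<mu> :: "'a::metric_space measure"
  assumes mms: "metric_measure_space \<mu>" and decay: "annular_decay \<mu> \<delta> D"
    and "1 \<le> D" "0 < \<delta>" "\<delta> \<le> 1" "1 \<le> L"
    and "0 < m" "m \<le> rx" "m \<le> ry" "\<bar>rx - ry\<bar> \<le> L * dist x y"
  shows "measure \<mu> (symdiff (cball x rx) (cball y ry))
      \<le> 4 * L * D * (dist x y / m) powr \<delta> * max (measure \<mu> (cball x rx)) (measure \<mu> (cball y ry))"
    (is "?S \<le> ?c * ?M")
proof (cases "dist x y < m")
  case True
  then show ?thesis
    using assms by (intro measure_symdiff_cball_le_of_dist_less) auto
next
  case False
  have "1 \<le> (dist x y / m) powr \<delta>"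
    using False assms(4,7) by (intro ge_one_powr_ge_zero) auto
  then have "1 \<le> L * D * (dist x y / m) powr \<delta>"
    using assms(3,6) mult_mono[of 1 L 1 D] mult_mono[of 1 "L * D" 1 "(dist x y / m) powr \<delta>"]
    by auto
  then have "2 \<le> ?c"
    by (simp only: mult.assoc)
  have "?S \<le> 2 * ?M"
    using mms by (intro measure_symdiff_le_twice_max metric_measure_space_fmeasurable_cball)
  also have "\<dots> \<le> ?c * ?M"
    using \<open>2 \<le> ?c\<close> by (intro mult_right_mono) (auto simp: le_max_iff_disj)
  finally show ?thesis .
qed

lemma compact_INF_pos:
  fixes f :: "'a::topological_space \<Rightarrow> real"
  assumes "compact K" "K \<noteq> {}" "continuous_on K f" "\<And>z. z \<in> K \<Longrightarrow> 0 < f z"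
  shows "0 < (INF z\<in>K. f z)"
proof -
  obtain z0 where "z0 \<in> K" "\<And>z. z \<in> K \<Longrightarrow> f z0 \<le> f z"
    using continuous_attains_inf[OF assms(1-3)] by blast
  then have "f z0 \<le> (INF z\<in>K. f z)"
    by (intro cINF_greatest) auto
  with assms(4)[OF \<open>z0 \<in> K\<close>] show ?thesis by linarith
qed

lemma divide_le_if_le_mult:
  fixes a b c :: real
  assumes "a \<le> c * b" "0 \<le> c" "0 \<le> b"
  shows "a / b \<le> c"
  using assms by (cases "b = 0") (auto simp: pos_divide_le_eq)

theorem lemma3p6:
  fixes \<mu> :: "('a::metric_space) measure" and \<delta> D L :: real
    and \<Omega> K :: "'a set" and \<rho> :: "'a \<Rightarrow> real"
  assumes "metric_measure_space \<mu>"
    and "0 < \<delta>" "\<delta> \<le> 1" "1 \<le> D" "annular_decay \<mu> \<delta> D"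
    and "domain \<Omega>" "1 \<le> L" "admissible_radius \<Omega> \<rho>" "lipschitz_in \<Omega> L \<rho>"
    and "compact K" "K \<subseteq> \<Omega>"
    and "x \<in> K" "y \<in> K"
  shows "measure \<mu> (symdiff (cball x (\<rho> x)) (cball y (\<rho> y)))
           / max (measure \<mu> (cball x (\<rho> x))) (measure \<mu> (cball y (\<rho> y)))
         \<le> 4 * L * D * (dist x y / (INF z\<in>K. \<rho> z)) powr \<delta>"
proof -
  have \<rho>_pos: "\<And>z. z \<in> K \<Longrightarrow> 0 < \<rho> z" and \<rho>_cont: "continuous_on K \<rho>"
    using assms(8,11) closure_subset[of \<Omega>]
    unfolding admissible_radius_def by (auto intro: continuous_on_subset)
  have INF_pos: "0 < (INF z\<in>K. \<rho> z)"
    using assms(10,12) \<rho>_pos \<rho>_cont by (intro compact_INF_pos) auto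
  have INF_le: "(INF z\<in>K. \<rho> z) \<le> \<rho> z" if "z \<in> K" for z
    using that assms(10) \<rho>_cont
    by (intro cINF_lower bounded_imp_bdd_below compact_imp_bounded compact_continuous_image)
  have "\<bar>\<rho> x - \<rho> y\<bar> \<le> L * dist x y"
    using assms(9,11-13) unfolding lipschitz_in_def by blast
  then have "measure \<mu> (symdiff (cball x (\<rho> x)) (cball y (\<rho> y)))
      \<le> 4 * L * D * (dist x y / (INF z\<in>K. \<rho> z)) powr \<delta>
        * max (measure \<mu> (cball x (\<rho> x))) (measure \<mu> (cball y (\<rho> y)))"
    using assms(1-5,7,12,13) INF_pos INF_le by (intro measure_symdiff_cball_le) auto
  then show ?thesis
    using assms(4,7) by (intro divide_le_if_le_mult) (auto simp: le_max_iff_disj)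
qed

end
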